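(* Let $k\ge2$, $d=4\cdot3^{k-1}$, and let $p:\Psi^k\to\{1,\dots,d\}$ be any bijection. For each group-theoretical relation $(\gamma,\psi)$ of level $k$ define $h_{\gamma,\psi}:\Delta^{d-1}\to\mathbb{R}$ by $$h_{\gamma,\psi}(x)=\sigma\Bigl(\sum_{\psi'\in S(\gamma,\psi)}x_{p(\psi')}\Bigr)\,\sigma\bigl(x_{p(\psi)}\bigr),$$ and let $G^k(x)=\max h_{\gamma,\psi}(x)$, the maximum over all group-theoretical relations $(\gamma,\psi)$ of level $k$. Then $\inf_{x\in\Delta^{d-1}}G^k(x)=12\cdot3^{k-1}-3$.
   Context: $\Gamma$ is the free group on $\xi,\eta$; $|w|$ denotes reduced word length; $\Psi^k$ is the set of reduced words of length exactly $k$ (so $|\Psi^k|=4\cdot3^{k-1}$). $\Delta^{d-1}=\{x\in\mathbb{R}^d: x_i>0,\ \sum_i x_i=1\}$ and $\sigma(t)=(1-t)/t$ for $t\in(0,1)$. A group-theoretical relation of level $k$ is a pair $(\gamma,\psi)$ with $\gamma\in\Gamma\setminus\{1\}$, $|\gamma|\le k$, $\psi\in\Psi^k$, and $|\gamma\psi|\le k$. For such a pair, $S(\gamma,\psi)\subset\Psi^k$ is: if $\gamma\psi=1$, the set of words in $\Psi^k$ whose first letter equals the first letter of the reduced word $\gamma$; if $\gamma\psi\ne1$, the set of words in $\Psi^k$ that do not have the reduced word $\gamma\psi$ as an initial subword. (In all cases $S(\gamma,\psi)$ is a nonempty proper subset of $\Psi^k$, so $h_{\gamma,\psi}$ is well defined.)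 *)

theory Defs
  imports Complex_Main "HOL-Library.Sublist"
begin

text \<open>Free group on two generators xi, eta, realised as reduced words.
  A letter is a generator together with a flag: False = the generator, True = its inverse.\<close>

datatype gen = Xi | Eta

type_synonym letter = "gen \<times> bool"
type_synonym word = "letter list"

definition inv_letter :: "letter \<Rightarrow> letter" where
  "inv_letter a = (fst a, \<not> snd a)"

definition reduced :: "word \<Rightarrow> bool" where
  "reduced w \<longleftrightarrow> (\<forall>i. Suc i < length w \<longrightarrow> w ! Suc i \<noteq> inv_letter (w ! i))"

definition FreeGroup :: "word set" where
  "FreeGroup = {w. reduced w}"

text \<open>Free reduction of (rev ra) @ v, where ra is reduced-reversed and v reduced.\<close>
fun app_red :: "word \<Rightarrow> word \<Rightarrow> word" where
  "app_red [] v = v"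
| "app_red ra [] = rev ra"
| "app_red (a # ra) (b # v) =
     (if b = inv_letter a then app_red ra v else rev (a # ra) @ b # v)"

definition gmult :: "word \<Rightarrow> word \<Rightarrow> word" where
  "gmult u v = app_red (rev u) v"

definition Psi :: "nat \<Rightarrow> word set" where
  "Psi k = {w. reduced w \<and> length w = k}"

definition GTRel :: "nat \<Rightarrow> (word \<times> word) set" where
  "GTRel k = {(\<gamma>, \<psi>). \<gamma> \<in> FreeGroup \<and> \<gamma> \<noteq> [] \<and> length \<gamma> \<le> k \<and> \<psi> \<in> Psi k
                     \<and> length (gmult \<gamma> \<psi>) \<le> k}"

definition Sset :: "nat \<Rightarrow> word \<Rightarrow> word \<Rightarrow> word set" where
  "Sset k \<gamma> \<psi> =
     (if gmult \<gamma> \<psi> = [] then {w \<in> Psi k. hd w = hd \<gamma>}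
      else {w \<in> Psi k. \<not> prefix (gmult \<gamma> \<psi>) w})"

definition simplex :: "nat \<Rightarrow> (nat \<Rightarrow> real) set" where
  "simplex d = {x. (\<forall>i\<in>{1..d}. x i > 0) \<and> (\<Sum>i=1..d. x i) = 1}"

definition sigma :: "real \<Rightarrow> real" where
  "sigma t = (1 - t) / t"

definition hfun :: "nat \<Rightarrow> (word \<Rightarrow> nat) \<Rightarrow> word \<Rightarrow> word \<Rightarrow> (nat \<Rightarrow> real) \<Rightarrow> real" where
  "hfun k p \<gamma> \<psi> x = sigma (\<Sum>\<psi>'\<in>Sset k \<gamma> \<psi>. x (p \<psi>')) * sigma (x (p \<psi>))"

definition Gk :: "nat \<Rightarrow> (word \<Rightarrow> nat) \<Rightarrow> (nat \<Rightarrow> real) \<Rightarrow> real" where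
  "Gk k p x = Max ((\<lambda>(\<gamma>, \<psi>). hfun k p \<gamma> \<psi> x) ` GTRel k)"

end

theory Submission
  imports Defs
begin

text \<open>At the barycentre of the simplex every set S(gamma, psi) contains at least a quarter of
  the d = |Psi^k| coordinates (all words starting with a fixed letter, or all but those), so
  every h(gamma, psi) is at most 3(d - 1). Conversely, the relations (psi^-1, psi) give
  sigma(A_a) sigma(x_psi) <= G^k(x), where A_a is the mass of the words starting with the
  inverse a of the last letter of psi. If G^k(x) < 3(d - 1), solving for x_psi gives
  x_psi > f(A_a) for a convex f; summing over psi and comparing f with its tangent at 1/4
  yields the contradiction 1 > 1.\<close>

definition word_inv :: "word \<Rightarrow> word" where
  "word_inv w = rev (map inv_letter w)"

definition Psi_hd :: "nat \<Rightarrow> letter \<Rightarrow> word set" where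
  "Psi_hd k a = {w \<in> Psi k. hd w = a}"

lemma inv_letter_inv_letter [simp]: "inv_letter (inv_letter a) = a"
  by (simp add: inv_letter_def)

lemma inv_letter_neq: "inv_letter a \<noteq> a"
  by (cases a) (simp add: inv_letter_def)

lemma length_word_inv [simp]: "length (word_inv w) = length w"
  by (simp add: word_inv_def)

lemma word_inv_word_inv [simp]: "word_inv (word_inv w) = w"
  by (simp add: word_inv_def rev_map comp_def)

lemma hd_word_inv: "w \<noteq> [] \<Longrightarrow> hd (word_inv w) = inv_letter (last w)"
  by (simp add: word_inv_def hd_rev last_map)

lemma gmult_word_inv: "gmult (word_inv w) w = []"
proof -
  have "app_red (map inv_letter w) w = []"
    by (induction w) auto
  then show ?thesis
    by (simp add: gmult_def word_inv_def)
qed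

lemma reduced_word_inv:
  assumes "reduced w"
  shows "reduced (word_inv w)"
  unfolding reduced_def
proof (intro allI impI)
  fix i assume i: "Suc i < length (word_inv w)"
  let ?n = "length w"
  have "w ! Suc (?n - 2 - i) \<noteq> inv_letter (w ! (?n - 2 - i))"
    using assms i unfolding reduced_def by auto
  moreover have "Suc (?n - 2 - i) = ?n - 1 - i"
    using i by simp
  moreover have "word_inv w ! Suc i = inv_letter (w ! (?n - 2 - i))"
    using i by (simp add: word_inv_def rev_nth numeral_2_eq_2)
  moreover have "word_inv w ! i = inv_letter (w ! (?n - 1 - i))"
    using i by (simp add: word_inv_def rev_nth)
  ultimately show "word_inv w ! Suc i \<noteq> inv_letter (word_inv w ! i)"
    by (metis inv_letter_inv_letter)
qed

lemma word_inv_in_Psi: "\<psi> \<in> Psi k \<Longrightarrow> word_inv \<psi> \<in> Psi k"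
  by (simp add: Psi_def reduced_word_inv)

lemma bij_betw_word_inv_Psi: "bij_betw word_inv (Psi k) (Psi k)"
  by (rule bij_betw_byWitness[where f' = word_inv]) (auto simp: word_inv_in_Psi)

lemma Psi_not_Nil: "\<psi> \<in> Psi k \<Longrightarrow> k \<ge> 1 \<Longrightarrow> \<psi> \<noteq> []"
  by (auto simp: Psi_def)

lemma word_inv_in_GTRel:
  assumes "\<psi> \<in> Psi k" and "k \<ge> 1"
  shows "(word_inv \<psi>, \<psi>) \<in> GTRel k"
proof -
  have "word_inv \<psi> \<noteq> []"
    using Psi_not_Nil[OF assms] by (metis length_0_conv length_word_inv)
  then show ?thesis
    using assms word_inv_in_Psi[OF assms(1)]
    by (auto simp: GTRel_def FreeGroup_def Psi_def gmult_word_inv)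
qed

lemma Sset_word_inv:
  assumes "\<psi> \<in> Psi k" and "k \<ge> 1"
  shows "Sset k (word_inv \<psi>) \<psi> = Psi_hd k (inv_letter (last \<psi>))"
  using Psi_not_Nil[OF assms]
  by (auto simp: Sset_def Psi_hd_def gmult_word_inv hd_word_inv)

lemma UNIV_letter: "(UNIV :: letter set) = {(Xi, False), (Xi, True), (Eta, False), (Eta, True)}"
  by (auto intro: gen.exhaust)

lemma finite_UNIV_letter [simp]: "finite (UNIV :: letter set)"
  by (simp add: UNIV_letter)

lemma card_UNIV_letter: "card (UNIV :: letter set) = 4"
  by (simp add: UNIV_letter)

lemma finite_words_length_le: "finite {w :: word. length w \<le> k}"
  using finite_lists_length_le[OF finite_UNIV_letter, of k] by simp

lemma finite_Psi: "finite (Psi k)"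
  by (rule finite_subset[OF _ finite_words_length_le[of k]]) (auto simp: Psi_def)

lemma finite_GTRel: "finite (GTRel k)"
  by (rule finite_subset[OF _ finite_cartesian_product[OF finite_words_length_le[of k] finite_Psi]])
     (auto simp: GTRel_def)

lemma finite_Psi_hd: "finite (Psi_hd k a)"
  using finite_Psi by (simp add: Psi_hd_def)

text \<open>The automorphism of the alphabet that exchanges the generators and/or inverts all
  letters, chosen so as to send a to b.\<close>

definition letter_aut :: "letter \<Rightarrow> letter \<Rightarrow> letter \<Rightarrow> letter" where
  "letter_aut a b l =
     (if fst a = fst b then fst l else (case fst l of Xi \<Rightarrow> Eta | Eta \<Rightarrow> Xi),
      if snd a = snd b then snd l else \<not> snd l)"

lemma letter_aut_eq_iff: "letter_aut a b l = letter_aut a b l' \<longleftrightarrow> l = l'"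
  unfolding letter_aut_def by (cases l; cases l'; auto split: gen.splits)

lemma letter_aut_inv_letter: "letter_aut a b (inv_letter l) = inv_letter (letter_aut a b l)"
  unfolding letter_aut_def inv_letter_def by (cases l; auto split: gen.splits)

lemma letter_aut_source: "letter_aut a b a = b"
proof -
  obtain g h and s t :: bool where "a = (g, s)" "b = (h, t)"
    by fastforce
  then show ?thesis
    unfolding letter_aut_def by (cases g; cases h; auto)
qed

lemma reduced_map_letter_aut: "reduced w \<Longrightarrow> reduced (map (letter_aut a b) w)"
  unfolding reduced_def by (auto simp: letter_aut_inv_letter[symmetric] letter_aut_eq_iff)

lemma card_Psi_hd_le:
  assumes "k \<ge> 1"
  shows "card (Psi_hd k a) \<le> card (Psi_hd k b)"
proof (rule card_inj_on_le[where f = "map (letter_aut a b)"])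
  show "inj_on (map (letter_aut a b)) (Psi_hd k a)"
    by (rule inj_onI) (metis inj_map_eq_map injI letter_aut_eq_iff)
  show "map (letter_aut a b) ` Psi_hd k a \<subseteq> Psi_hd k b"
  proof
    fix v assume "v \<in> map (letter_aut a b) ` Psi_hd k a"
    then obtain w where w: "w \<in> Psi_hd k a" "v = map (letter_aut a b) w"
      by auto
    then have "w \<noteq> []"
      using Psi_not_Nil[OF _ assms] by (auto simp: Psi_hd_def)
    then show "v \<in> Psi_hd k b"
      using w by (auto simp: Psi_hd_def Psi_def reduced_map_letter_aut hd_map letter_aut_source)
  qed
qed (rule finite_Psi_hd)

lemma sum_Psi_by_hd: "(\<Sum>w\<in>Psi k. g w) = (\<Sum>a\<in>UNIV. \<Sum>w\<in>Psi_hd k a. g w)"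
  unfolding Psi_hd_def using sum.group[of "Psi k" UNIV hd g] finite_Psi by simp

lemma card_Psi_hd:
  assumes "k \<ge> 1"
  shows "4 * card (Psi_hd k a) = card (Psi k)"
proof -
  have "card (Psi k) = (\<Sum>b\<in>UNIV. card (Psi_hd k b))"
    using sum_Psi_by_hd[of "\<lambda>_. 1::nat" k] by simp
  also have "\<dots> = (\<Sum>b\<in>(UNIV::letter set). card (Psi_hd k a))"
    by (intro sum.cong refl antisym card_Psi_hd_le[OF assms])
  finally show ?thesis
    by (simp add: card_UNIV_letter)
qed

lemma replicate_in_Psi_hd: "k \<ge> 1 \<Longrightarrow> replicate k a \<in> Psi_hd k a"
  by (auto simp: Psi_hd_def Psi_def reduced_def inv_letter_neq[symmetric])

lemma card_Psi_ge_4: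
  assumes "k \<ge> 1"
  shows "4 \<le> card (Psi k)"
proof -
  have "card (Psi_hd k a) \<ge> 1" for a
    using replicate_in_Psi_hd[OF assms] finite_Psi_hd card_0_eq by (metis empty_iff less_one not_le)
  then show ?thesis
    using card_Psi_hd[OF assms] by (metis mult_le_mono2 nat_mult_1_right)
qed

lemma sum_Psi_hd_eq:
  assumes "k \<ge> 1"
  shows "(\<Sum>w\<in>Psi k. g (hd w)) = real (card (Psi k)) / 4 * (\<Sum>a\<in>UNIV. g a)"
proof -
  have "(\<Sum>w\<in>Psi k. g (hd w)) = (\<Sum>a\<in>UNIV. \<Sum>w\<in>Psi_hd k a. g a)"
    unfolding sum_Psi_by_hd[of "\<lambda>w. g (hd w)"] by (intro sum.cong) (auto simp: Psi_hd_def)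
  also have "\<dots> = (\<Sum>a\<in>UNIV. real (card (Psi k)) / 4 * g a)"
  proof (intro sum.cong refl)
    fix a
    have "real (card (Psi_hd k a)) = real (card (Psi k)) / 4"
      using card_Psi_hd[OF assms, of a] by linarith
    then show "(\<Sum>w\<in>Psi_hd k a. g a) = real (card (Psi k)) / 4 * g a"
      by simp
  qed
  finally show ?thesis
    by (simp add: sum_distrib_left)
qed

lemma sum_Psi_inv_last_eq_hd:
  assumes "k \<ge> 1"
  shows "(\<Sum>\<psi>\<in>Psi k. g (inv_letter (last \<psi>))) = (\<Sum>\<psi>\<in>Psi k. g (hd \<psi>))"
proof -
  have "(\<Sum>\<psi>\<in>Psi k. g (inv_letter (last \<psi>))) = (\<Sum>\<psi>\<in>Psi k. g (hd (word_inv \<psi>)))"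
    using Psi_not_Nil[OF _ assms] by (intro sum.cong) (auto simp: hd_word_inv)
  also have "\<dots> = (\<Sum>\<psi>\<in>Psi k. g (hd \<psi>))"
    using sum.reindex_bij_betw[OF bij_betw_word_inv_Psi, of "\<lambda>\<psi>. g (hd \<psi>)"] by simp
  finally show ?thesis .
qed

lemma card_Sset_ge:
  assumes "k \<ge> 1"
  shows "card (Psi k) \<le> 4 * card (Sset k \<gamma> \<psi>)"
proof (cases "gmult \<gamma> \<psi> = []")
  case True
  then have "Sset k \<gamma> \<psi> = Psi_hd k (hd \<gamma>)"
    by (simp add: Sset_def Psi_hd_def)
  then show ?thesis
    using card_Psi_hd[OF assms] by simp
next
  case False
  let ?w = "gmult \<gamma> \<psi>"
  have "Psi k - Psi_hd k (hd ?w) \<subseteq> Sset k \<gamma> \<psi>"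
    using False by (auto simp: Sset_def Psi_hd_def prefix_def)
  then have "card (Psi k - Psi_hd k (hd ?w)) \<le> card (Sset k \<gamma> \<psi>)"
    by (rule card_mono[rotated]) (auto simp: Sset_def finite_Psi)
  moreover have "card (Psi k - Psi_hd k (hd ?w)) = card (Psi k) - card (Psi_hd k (hd ?w))"
    by (rule card_Diff_subset) (auto simp: Psi_hd_def finite_Psi)
  ultimately show ?thesis
    using card_Psi_hd[OF assms, of "hd ?w"] by linarith
qed

lemma hfun_le_Gk: "(\<gamma>, \<psi>) \<in> GTRel k \<Longrightarrow> hfun k p \<gamma> \<psi> x \<le> Gk k p x"
  unfolding Gk_def using finite_GTRel by (auto intro: Max_ge)

lemma sigma_mult_less_imp:
  fixes a y c :: real
  assumes "a > 0" "y > 0" "c \<ge> 1" "sigma a * sigma y < c"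
  shows "(1 - a) / (1 + (c - 1) * a) < y"
proof -
  have "(1 - a) * (1 - y) < c * (a * y)"
    using assms by (simp add: sigma_def divide_less_eq)
  then have "1 - a < y * (1 + (c - 1) * a)"
    by (simp add: algebra_simps)
  moreover have "1 + (c - 1) * a > 0"
    using assms by (simp add: add_pos_nonneg)
  ultimately show ?thesis
    by (simp add: divide_less_eq mult.commute)
qed

lemma above_tangent_quarter:
  fixes c t :: real
  assumes "c \<ge> 1" "t > 0"
  shows "3 / (c + 3) - 16 * c / (c + 3)\<^sup>2 * (t - 1/4) \<le> (1 - t) / (1 + (c - 1) * t)"
proof -
  define den where "den = 1 + (c - 1) * t"
  have den: "den > 0"
    using assms by (simp add: den_def add_pos_nonneg)
  have tangent: "3 / m - 16 * c / m\<^sup>2 * (t - 1/4) = (3 * m - 16 * c * (t - 1/4)) / m\<^sup>2"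
    if "m > 0" for m :: real
    using that by (simp add: power2_eq_square field_simps)
  \<comment> \<open>the gap between f and its tangent, times (c + 3)^2 den\<close>
  have "(c + 3)\<^sup>2 * (1 - t) - den * (3 * (c + 3) - 16 * c * (t - 1/4)) = c * (c - 1) * (4 * t - 1)\<^sup>2"
    unfolding den_def power2_eq_square by (simp add: algebra_simps)
  moreover have "c * (c - 1) * (4 * t - 1)\<^sup>2 \<ge> 0"
    using assms by simp
  ultimately have "den * (3 * (c + 3) - 16 * c * (t - 1/4)) \<le> (c + 3)\<^sup>2 * (1 - t)"
    by linarith
  then show ?thesis
    using den assms tangent[of "c + 3"] unfolding den_def[symmetric] by (simp add: divide_simps mult.commute)
qed

lemma sum_letters_fraction_ge:
  fixes c :: real and A :: "letter \<Rightarrow> real"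
  assumes "c \<ge> 1" "\<And>a. A a > 0" "(\<Sum>a\<in>UNIV. A a) = 1"
  shows "12 / (c + 3) \<le> (\<Sum>a\<in>UNIV. (1 - A a) / (1 + (c - 1) * A a))"
proof -
  define s where "s = 16 * c / (c + 3)\<^sup>2"
  have "(\<Sum>a\<in>UNIV. 3 / (c + 3) - s * (A a - 1/4)) \<le> (\<Sum>a\<in>UNIV. (1 - A a) / (1 + (c - 1) * A a))"
    using above_tangent_quarter[OF assms(1) assms(2)] unfolding s_def by (intro sum_mono) auto
  moreover have "(\<Sum>a\<in>UNIV. 3 / (c + 3) - s * (A a - 1/4)) = 12 / (c + 3)"
    using assms(3) by (simp add: sum_subtractf sum_distrib_left[symmetric] card_UNIV_letter)
  ultimately show ?thesis
    by simp
qed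

lemma Gk_lower_bound:
  assumes k: "k \<ge> 1" and p: "bij_betw p (Psi k) {1..d}" and x: "x \<in> simplex d"
  shows "3 * (real d - 1) \<le> Gk k p x"
proof (rule ccontr)
  define c where "c = 3 * (real d - 1)"
  define A where "A a = (\<Sum>w\<in>Psi_hd k a. x (p w))" for a
  define f where "f t = (1 - t) / (1 + (c - 1) * t)" for t
  assume "\<not> 3 * (real d - 1) \<le> Gk k p x"
  then have G: "Gk k p x < c"
    by (simp add: c_def)
  have card: "card (Psi k) = d"
    using bij_betw_same_card[OF p] by simp
  then have d: "d \<ge> 4"
    using card_Psi_ge_4[OF k] by simp
  then have c: "c \<ge> 1"
    by (simp add: c_def)
  have xpos: "x (p \<psi>) > 0" if "\<psi> \<in> Psi k" for \<psi>
    using x bij_betw_apply[OF p that] by (auto simp: simplex_def)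
  have sum_x: "(\<Sum>\<psi>\<in>Psi k. x (p \<psi>)) = 1"
    using sum.reindex_bij_betw[OF p, of x] x by (simp add: simplex_def)
  have Apos: "A a > 0" for a
    unfolding A_def using replicate_in_Psi_hd[OF k, of a]
    by (intro sum_pos finite_Psi_hd) (auto simp: Psi_hd_def xpos)
  have sum_A: "(\<Sum>a\<in>UNIV. A a) = 1"
    using sum_Psi_by_hd[of "\<lambda>w. x (p w)" k] sum_x by (simp add: A_def)
  have "f (A (inv_letter (last \<psi>))) < x (p \<psi>)" if "\<psi> \<in> Psi k" for \<psi>
  proof -
    have "hfun k p (word_inv \<psi>) \<psi> x = sigma (A (inv_letter (last \<psi>))) * sigma (x (p \<psi>))"
      using Sset_word_inv[OF that k] by (simp add: hfun_def A_def)
    then have "sigma (A (inv_letter (last \<psi>))) * sigma (x (p \<psi>)) < c"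
      using hfun_le_Gk[OF word_inv_in_GTRel[OF that k], of p x] G by simp
    then show ?thesis
      unfolding f_def using sigma_mult_less_imp Apos xpos[OF that] c by blast
  qed
  then have "(\<Sum>\<psi>\<in>Psi k. f (A (inv_letter (last \<psi>)))) < (\<Sum>\<psi>\<in>Psi k. x (p \<psi>))"
    using card d by (intro sum_strict_mono finite_Psi) auto
  also have "\<dots> = real d / 4 * (12 / (c + 3))"
    using sum_x d by (simp add: c_def)
  also have "\<dots> \<le> real d / 4 * (\<Sum>a\<in>UNIV. f (A a))"
    unfolding f_def by (intro mult_left_mono sum_letters_fraction_ge[OF c Apos sum_A]) simp
  also have "\<dots> = (\<Sum>\<psi>\<in>Psi k. f (A (inv_letter (last \<psi>))))"
    using sum_Psi_inv_last_eq_hd[OF k, of "\<lambda>a. f (A a)"] sum_Psi_hd_eq[OF k, of "\<lambda>a. f (A a)"] card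
    by simp
  finally show False
    by simp
qed

lemma sigma_inverse_nat: "n > 0 \<Longrightarrow> sigma (1 / real n) = real n - 1"
  by (simp add: sigma_def field_simps)

lemma Gk_barycentre_upper_bound:
  assumes k: "k \<ge> 1" and card: "card (Psi k) = d"
  shows "Gk k p (\<lambda>_. 1 / real d) \<le> 3 * (real d - 1)"
proof -
  have d: "d \<ge> 4"
    using card_Psi_ge_4[OF k] card by simp
  have "hfun k p \<gamma> \<psi> (\<lambda>_. 1 / real d) \<le> 3 * (real d - 1)" for \<gamma> \<psi>
  proof -
    define s where "s = real (card (Sset k \<gamma> \<psi>))"
    have s: "real d \<le> 4 * s"
      using card_Sset_ge[OF k, of \<gamma> \<psi>] card by (simp add: s_def)
    then have "sigma (s / real d) \<le> 3"
      using d by (simp add: sigma_def field_simps)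
    moreover have "hfun k p \<gamma> \<psi> (\<lambda>_. 1 / real d) = sigma (s / real d) * (real d - 1)"
      using d by (simp add: hfun_def s_def sigma_inverse_nat)
    ultimately show ?thesis
      using d by (simp add: mult_right_mono[of _ 3 "real d - 1", simplified])
  qed
  moreover have "GTRel k \<noteq> {}"
    using replicate_in_Psi_hd[OF k] word_inv_in_GTRel[OF _ k] by (auto simp: Psi_hd_def)
  ultimately show ?thesis
    unfolding Gk_def using finite_GTRel by (intro Max.boundedI) auto
qed

theorem mainTheorem12:
  fixes k :: nat and p :: "word \<Rightarrow> nat"
  assumes "k \<ge> 2"
    and "bij_betw p (Psi k) {1..4 * 3 ^ (k - 1)}"
  shows "(INF x\<in>simplex (4 * 3 ^ (k - 1)). Gk k p x) = 12 * 3 ^ (k - 1) - 3"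
proof -
  define d :: nat where "d = 4 * 3 ^ (k - 1)"
  have k: "k \<ge> 1"
    using assms(1) by simp
  have p: "bij_betw p (Psi k) {1..d}"
    using assms(2) by (simp add: d_def)
  have barycentre: "(\<lambda>_. 1 / real d) \<in> simplex d"
    by (simp add: simplex_def d_def)
  have "(INF x\<in>simplex d. Gk k p x) = 3 * (real d - 1)"
  proof (rule antisym)
    show "(INF x\<in>simplex d. Gk k p x) \<le> 3 * (real d - 1)"
      using Gk_barycentre_upper_bound[OF k bij_betw_same_card[OF p]] Gk_lower_bound[OF k p]
      by (intro cInf_lower2[OF imageI[OF barycentre]] bdd_belowI2) auto
    show "3 * (real d - 1) \<le> (INF x\<in>simplex d. Gk k p x)"
      using Gk_lower_bound[OF k p] barycentre by (intro cINF_greatest) auto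
  qed
  then show ?thesis
    by (simp add: d_def)
qed

end
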